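(* Under the mixed membership model $\mathbb{E}\mathbf{X}=\mathbf{H}=\theta\mathbf{\Pi}\mathbf{P}\mathbf{\Pi}^T$, assume there exist constants $0<c_0,c_1<1$ such that $\lambda_K(\mathbf{\Pi}^T\mathbf{\Pi})\ge c_0 n$, $\lambda_K(\mathbf{P})\ge c_0$, and $\theta\ge n^{-c_1}$. Then $$\alpha_n^2\le n\theta,\qquad d_k\sim n\theta,\quad k=1,\cdots,K.$$ Under the degree-corrected mixed membership model $\mathbf{H}=\mathbf{\Theta}\mathbf{\Pi}\mathbf{P}\mathbf{\Pi}^T\mathbf{\Theta}$, assume there exist constants $c_2,c_3\in(0,1)$ and $c_4>0$ such that $\min_{1\le k\le K}|\mathcal{N}_k|\ge c_2 n$, $\theta_{\max}\le c_4\theta_{\min}$, and $\theta_{\min}^2\ge n^{-c_3}$. Then similarly $$\alpha_n^2\le n\theta_{\max}^2,\qquad d_k\sim n\theta_{\max}^2,\quad k=1,\cdots,K.$$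
   Context: An undirected network on $n$ nodes has symmetric adjacency matrix $\mathbf{X}=\mathbf{H}+\mathbf{W}$, where the upper-triangular (including diagonal) entries of $\mathbf{X}$ are independent Bernoulli variables, $\mathbf{H}$ is the deterministic mean (probability) matrix of rank $K$ (fixed), and $\mathbf{W}=(w_{ij})$ is a symmetric noise matrix with independent entries on and above the diagonal. Let $\alpha_n=\{\max_{1\le j\le n}\sum_{i=1}^n\mathrm{var}(w_{ij})\}^{1/2}$. Write the eigendecomposition $\mathbf{H}=\mathbf{V}\mathbf{D}\mathbf{V}^T$ with $\mathbf{D}=\mathrm{diag}(d_1,\cdots,d_K)$, $|d_1|\ge\cdots\ge|d_K|>0$. Here $\mathbf{\Pi}=(\boldsymbol{\pi}_1,\cdots,\boldsymbol{\pi}_n)^T\in\mathbb{R}^{n\times K}$ has rows $\boldsymbol{\pi}_i$ that are community membership probability vectors (nonnegative entries summing to one), $\mathbf{P}=(p_{kl})\in\mathbb{R}^{K\times K}$ is nonsingular with entries in $[0,1]$, $\theta>0$ (possibly depending on $n$), $\mathbf{\Theta}=\mathrm{diag}(\theta_1,\cdots,\theta_n)$ with $\theta_i>0$ the degree heterogeneity parameters, $\theta_{\max}=\max_i\theta_i$, $\theta_{\min}=\min_i\theta_i$, and $\mathcal{N}_k=\{i:\boldsymbol{\pi}_i(k)=1\}$ is the set of pure nodes of community $k$. $\lambda_K(\cdot)$ denotes the $K$th largest eigenvalue; $a\sim b$ means same asymptotic order. *)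

theory Defs
  imports "Jordan_Normal_Form.Matrix" "Jordan_Normal_Form.Char_Poly"
begin

text \<open>lambda_K(A) for a K x K real symmetric matrix A: the K-th largest of its K
  (real) eigenvalues counted with multiplicity, i.e. the smallest eigenvalue.\<close>
definition lambda_K :: "real mat \<Rightarrow> real" where
  "lambda_K A = Min {x. eigenvalue A x}"

text \<open>alpha_n^2 = max_j sum_i var(w_ij) for the Bernoulli network with mean matrix H:
  var(w_ij) = h_ij (1 - h_ij).\<close>
definition alpha_sq :: "real mat \<Rightarrow> real" where
  "alpha_sq H = Max ((\<lambda>j. \<Sum>i<dim_row H. H $$ (i,j) * (1 - H $$ (i,j))) ` {..<dim_col H})"

definition membership_mat :: "nat \<Rightarrow> nat \<Rightarrow> real mat \<Rightarrow> bool" where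
  "membership_mat n K Pm \<longleftrightarrow> Pm \<in> carrier_mat n K \<and>
     (\<forall>i<n. (\<forall>k<K. Pm $$ (i,k) \<ge> 0) \<and> (\<Sum>k<K. Pm $$ (i,k)) = 1)"

definition conn_mat :: "nat \<Rightarrow> real mat \<Rightarrow> bool" where
  "conn_mat K P \<longleftrightarrow> P \<in> carrier_mat K K \<and> P\<^sup>T = P \<and>
     (\<forall>k<K. \<forall>l<K. 0 \<le> P $$ (k,l) \<and> P $$ (k,l) \<le> 1) \<and> det P \<noteq> 0"

definition prob_mat :: "nat \<Rightarrow> real mat \<Rightarrow> bool" where
  "prob_mat n H \<longleftrightarrow> H \<in> carrier_mat n n \<and> (\<forall>i<n. \<forall>j<n. 0 \<le> H $$ (i,j) \<and> H $$ (i,j) \<le> 1)"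

definition eigdecomp :: "nat \<Rightarrow> nat \<Rightarrow> real mat \<Rightarrow> real mat \<Rightarrow> (nat \<Rightarrow> real) \<Rightarrow> bool" where
  "eigdecomp n K H V d \<longleftrightarrow> V \<in> carrier_mat n K \<and> V\<^sup>T * V = 1\<^sub>m K \<and>
     H = V * mat K K (\<lambda>(k,l). if k = l then d k else 0) * V\<^sup>T \<and> (\<forall>k<K. d k \<noteq> 0)"

definition diag_of :: "nat \<Rightarrow> (nat \<Rightarrow> real) \<Rightarrow> real mat" where
  "diag_of n th = mat n n (\<lambda>(i,j). if i = j then th i else 0)"

definition pure_nodes :: "nat \<Rightarrow> real mat \<Rightarrow> nat \<Rightarrow> nat set" where
  "pure_nodes n Pm k = {i. i < n \<and> Pm $$ (i,k) = 1}"

definition H_dcmm :: "nat \<Rightarrow> (nat \<Rightarrow> real) \<Rightarrow> real mat \<Rightarrow> real mat \<Rightarrow> real mat" where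
  "H_dcmm n th Pm P = diag_of n th * Pm * P * Pm\<^sup>T * diag_of n th"

definition theta_max :: "nat \<Rightarrow> (nat \<Rightarrow> real) \<Rightarrow> real" where
  "theta_max n th = Max (th ` {..<n})"

definition theta_min :: "nat \<Rightarrow> (nat \<Rightarrow> real) \<Rightarrow> real" where
  "theta_min n th = Min (th ` {..<n})"

end

theory Submission
  imports Defs
begin

text \<open>Every entry of \<open>H\<close> lies in \<open>[0, \<theta>]\<close> (resp. \<open>[0, \<theta>\<^sub>m\<^sub>a\<^sub>x\<^sup>2]\<close>); this bounds
  \<open>\<alpha>\<^sub>n\<^sup>2\<close> and, via the Rayleigh quotient of a unit eigenvector, \<open>|d\<^sub>k|\<close> from above.
  For the lower bound write \<open>H = A P A\<^sup>T\<close> (with \<open>A = \<Pi>\<close> and \<open>P\<close> scaled by \<open>\<theta>\<close>, resp.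
  \<open>A = \<Theta> \<Pi>\<close>). For an eigenpair \<open>(d, v)\<close> the vectors \<open>u = A\<^sup>T v\<close>, \<open>w = P u\<close> satisfy
  \<open>d (u \<bullet> w) = \<parallel>A w\<parallel>\<^sup>2\<close>, so Cauchy--Schwarz gives \<open>d\<^sup>2 \<ge> g\<^sup>2 s\<close> as soon as
  \<open>\<parallel>A w\<parallel>\<^sup>2 \<ge> g \<parallel>w\<parallel>\<^sup>2\<close> and \<open>\<parallel>P u\<parallel>\<^sup>2 \<ge> s \<parallel>u\<parallel>\<^sup>2\<close>. In the mixed membership model \<open>g\<close> and
  \<open>s\<close> come from \<open>\<lambda>\<^sub>K(\<Pi>\<^sup>T \<Pi>)\<close> and \<open>\<lambda>\<^sub>K(P)\<close> through the variational characterisation of the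
  smallest eigenvalue; in the degree-corrected model \<open>g\<close> comes from the pure nodes and \<open>s\<close> from
  the invertibility of \<open>P\<close>.\<close>

section \<open>Quadratic forms on real vectors\<close>

lemma scalar_prod_self_nonneg: "0 \<le> (y :: real vec) \<bullet> y"
  unfolding scalar_prod_def by (intro sum_nonneg) auto

lemma scalar_prod_self_eq_0_iff:
  fixes y :: "real vec"
  assumes "y \<in> carrier_vec n"
  shows "y \<bullet> y = 0 \<longleftrightarrow> y = 0\<^sub>v n"
  using conjugate_square_eq_0_vec[OF assms] by simp

lemma scalar_prod_lessThan:
  "x \<in> carrier_vec n \<Longrightarrow> y \<in> carrier_vec n \<Longrightarrow> x \<bullet> y = (\<Sum>i<n. x $ i * y $ i)"
  unfolding scalar_prod_def by (auto intro: sum.cong)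

lemma mult_mat_vec_self_scalar_prod:
  fixes A :: "real mat"
  assumes "A \<in> carrier_mat nr nc" "w \<in> carrier_vec nc"
  shows "(A *\<^sub>v w) \<bullet> (A *\<^sub>v w) = w \<bullet> ((A\<^sup>T * A) *\<^sub>v w)"
  using transpose_vec_mult_scalar[of A nr nc w "A *\<^sub>v w"] assms
  by (simp add: comm_scalar_prod[of _ nc])

lemma smult_mat_mult_mat_vec:
  fixes M :: "'a :: comm_semiring_0 mat"
  assumes "M \<in> carrier_mat nr nc" "v \<in> carrier_vec nc"
  shows "(c \<cdot>\<^sub>m M) *\<^sub>v v = c \<cdot>\<^sub>v (M *\<^sub>v v)"
  using assms by (intro eq_vecI) (auto simp: scalar_prod_def sum_distrib_left mult.assoc)

lemma bilinear_form_double_sum: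
  fixes B :: "real mat"
  assumes "B \<in> carrier_mat n n" "x \<in> carrier_vec n" "y \<in> carrier_vec n"
  shows "x \<bullet> (B *\<^sub>v y) = (\<Sum>i<n. \<Sum>j<n. B $$ (i,j) * x $ i * y $ j)"
proof -
  have "x \<bullet> (B *\<^sub>v y) = (\<Sum>i<n. x $ i * (\<Sum>j<n. B $$ (i,j) * y $ j))"
    using assms by (simp add: scalar_prod_lessThan mult_mat_vec_def row_def)
  then show ?thesis
    unfolding sum_distrib_left by (simp add: algebra_simps)
qed

lemma mult_mult_transpose_index:
  fixes A P :: "real mat"
  assumes "A \<in> carrier_mat n K" "P \<in> carrier_mat K K" "i < n" "j < n"
  shows "(A * P * A\<^sup>T) $$ (i,j) = (\<Sum>k<K. \<Sum>l<K. A $$ (i,k) * P $$ (k,l) * A $$ (j,l))"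
  using assms
  by (simp add: scalar_prod_def atLeast0LessThan row_def col_def sum_distrib_left mult.assoc)

lemma bilinear_form_swap:
  fixes B :: "real mat"
  assumes B: "B \<in> carrier_mat n n" "B\<^sup>T = B" and x: "x \<in> carrier_vec n" and y: "y \<in> carrier_vec n"
  shows "x \<bullet> (B *\<^sub>v y) = y \<bullet> (B *\<^sub>v x)"
proof -
  have "x \<bullet> (B *\<^sub>v y) = (B\<^sup>T *\<^sub>v x) \<bullet> y"
    using transpose_vec_mult_scalar[OF B(1) y x] by simp
  also have "\<dots> = y \<bullet> (B *\<^sub>v x)"
    using B x y by (simp add: comm_scalar_prod[of _ n])
  finally show ?thesis .
qed

lemma quadratic_form_abs_le:
  fixes M :: "real mat"
  assumes M: "M \<in> carrier_mat n n" and v: "v \<in> carrier_vec n"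
    and b: "\<And>i j. i < n \<Longrightarrow> j < n \<Longrightarrow> \<bar>M $$ (i,j)\<bar> \<le> b"
  shows "\<bar>v \<bullet> (M *\<^sub>v v)\<bar> \<le> b * n * (v \<bullet> v)"
proof -
  have "\<bar>v \<bullet> (M *\<^sub>v v)\<bar> \<le> (\<Sum>i<n. \<Sum>j<n. \<bar>M $$ (i,j) * v $ i * v $ j\<bar>)"
    unfolding bilinear_form_double_sum[OF M v v]
    by (rule order_trans[OF sum_abs], intro sum_mono sum_abs)
  also have "\<dots> \<le> (\<Sum>i<n. \<Sum>j<n. b * ((v $ i)\<^sup>2 + (v $ j)\<^sup>2) / 2)"
  proof (intro sum_mono)
    fix i j assume "i \<in> {..<n}" "j \<in> {..<n}"
    then have "\<bar>M $$ (i,j)\<bar> \<le> b" using b by auto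
    moreover have "\<bar>v $ i * v $ j\<bar> \<le> ((v $ i)\<^sup>2 + (v $ j)\<^sup>2) / 2"
      using sum_squares_bound[of "\<bar>v $ i\<bar>" "\<bar>v $ j\<bar>"] by (simp add: abs_mult)
    ultimately have "\<bar>M $$ (i,j)\<bar> * \<bar>v $ i * v $ j\<bar> \<le> b * (((v $ i)\<^sup>2 + (v $ j)\<^sup>2) / 2)"
      by (intro mult_mono) auto
    then show "\<bar>M $$ (i,j) * v $ i * v $ j\<bar> \<le> b * ((v $ i)\<^sup>2 + (v $ j)\<^sup>2) / 2"
      by (simp add: abs_mult mult.assoc)
  qed
  also have "\<dots> = b * n * (\<Sum>i<n. (v $ i)\<^sup>2)"
    by (simp add: sum.distrib sum_divide_distrib[symmetric] sum_distrib_left[symmetric]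
        add_divide_distrib algebra_simps)
  also have "(\<Sum>i<n. (v $ i)\<^sup>2) = v \<bullet> v"
    using v by (simp add: scalar_prod_lessThan power2_eq_square)
  finally show ?thesis .
qed

lemma quadratic_form_bounded:
  fixes M :: "real mat"
  assumes M: "M \<in> carrier_mat n n"
  obtains b where "b > 0" "\<And>v. v \<in> carrier_vec n \<Longrightarrow> \<bar>v \<bullet> (M *\<^sub>v v)\<bar> \<le> b * (v \<bullet> v)"
proof -
  define S where "S = (\<Sum>i<n. \<Sum>j<n. \<bar>M $$ (i,j)\<bar>)"
  have "\<bar>M $$ (i,j)\<bar> \<le> S" if "i < n" "j < n" for i j
  proof -
    have "\<bar>M $$ (i,j)\<bar> \<le> (\<Sum>j<n. \<bar>M $$ (i,j)\<bar>)"
      using that by (intro member_le_sum) auto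
    also have "\<dots> \<le> S"
      unfolding S_def using that by (intro member_le_sum[where f = "\<lambda>i. \<Sum>j<n. \<bar>M $$ (i,j)\<bar>"]) auto
    finally show ?thesis .
  qed
  then have "\<bar>v \<bullet> (M *\<^sub>v v)\<bar> \<le> (S * n + 1) * (v \<bullet> v)" if "v \<in> carrier_vec n" for v
    using quadratic_form_abs_le[OF M that, of S] scalar_prod_self_nonneg[of v]
    by (simp add: algebra_simps)
  moreover have "S * n + 1 > 0" unfolding S_def by (intro add_nonneg_pos mult_nonneg_nonneg sum_nonneg) auto
  ultimately show ?thesis using that by blast
qed

lemma quadratic_form_add_smult:
  fixes B :: "real mat"
  assumes B: "B \<in> carrier_mat n n" "B\<^sup>T = B" and x: "x \<in> carrier_vec n" and y: "y \<in> carrier_vec n"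
  shows "(x + t \<cdot>\<^sub>v y) \<bullet> (B *\<^sub>v (x + t \<cdot>\<^sub>v y)) =
    x \<bullet> (B *\<^sub>v x) + 2 * (x \<bullet> (B *\<^sub>v y)) * t + (y \<bullet> (B *\<^sub>v y)) * t\<^sup>2"
proof -
  have z: "x + t \<cdot>\<^sub>v y \<in> carrier_vec n" using x y by simp
  have "(x + t \<cdot>\<^sub>v y) \<bullet> (B *\<^sub>v (x + t \<cdot>\<^sub>v y)) =
      (\<Sum>i<n. \<Sum>j<n. B $$ (i,j) * (x $ i + t * y $ i) * (x $ j + t * y $ j))"
    using x y by (simp add: bilinear_form_double_sum[OF B(1) z z])
  also have "\<dots> = (\<Sum>i<n. \<Sum>j<n. B $$ (i,j) * x $ i * x $ j)
      + t * (\<Sum>i<n. \<Sum>j<n. B $$ (i,j) * x $ i * y $ j)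
      + t * (\<Sum>i<n. \<Sum>j<n. B $$ (i,j) * y $ i * x $ j)
      + t\<^sup>2 * (\<Sum>i<n. \<Sum>j<n. B $$ (i,j) * y $ i * y $ j)"
    by (simp add: sum.distrib sum_distrib_left algebra_simps power2_eq_square)
  also have "\<dots> = x \<bullet> (B *\<^sub>v x) + t * (x \<bullet> (B *\<^sub>v y)) + t * (y \<bullet> (B *\<^sub>v x)) + t\<^sup>2 * (y \<bullet> (B *\<^sub>v y))"
    using B x y by (simp add: bilinear_form_double_sum)
  finally show ?thesis
    using bilinear_form_swap[OF B y x] by (simp add: algebra_simps)
qed

lemma quadratic_nonneg_discriminant:
  fixes a b c :: real
  assumes nonneg: "\<And>t. 0 \<le> a + 2 * b * t + c * t\<^sup>2" and "0 \<le> c"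
  shows "b\<^sup>2 \<le> a * c"
proof (cases "c = 0")
  case True
  have "b = 0"
  proof (rule ccontr)
    assume "b \<noteq> 0"
    then have "a + 2 * b * (- (a + 1) / (2 * b)) + c * (- (a + 1) / (2 * b))\<^sup>2 = -1"
      using True by (simp add: field_simps)
    then show False using nonneg by (metis neg_0_le_iff_le not_one_le_zero)
  qed
  then show ?thesis using True by simp
next
  case False
  then have "c > 0" using \<open>0 \<le> c\<close> by simp
  have "0 \<le> a + 2 * b * (- b / c) + c * (- b / c)\<^sup>2" by (rule nonneg)
  also have "\<dots> = a - b\<^sup>2 / c" using \<open>c > 0\<close> by (simp add: field_simps power2_eq_square)
  finally show ?thesis using \<open>c > 0\<close> by (simp add: field_simps mult.commute)
qed

lemma psd_form_cauchy_schwarz: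
  fixes B :: "real mat"
  assumes B: "B \<in> carrier_mat n n" "B\<^sup>T = B"
    and psd: "\<And>z. z \<in> carrier_vec n \<Longrightarrow> 0 \<le> z \<bullet> (B *\<^sub>v z)"
    and x: "x \<in> carrier_vec n" and y: "y \<in> carrier_vec n"
  shows "(x \<bullet> (B *\<^sub>v y))\<^sup>2 \<le> (x \<bullet> (B *\<^sub>v x)) * (y \<bullet> (B *\<^sub>v y))"
proof (rule quadratic_nonneg_discriminant)
  fix t :: real
  have "0 \<le> (x + t \<cdot>\<^sub>v y) \<bullet> (B *\<^sub>v (x + t \<cdot>\<^sub>v y))" using x y by (intro psd) simp
  then show "0 \<le> x \<bullet> (B *\<^sub>v x) + 2 * (x \<bullet> (B *\<^sub>v y)) * t + (y \<bullet> (B *\<^sub>v y)) * t\<^sup>2"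
    using quadratic_form_add_smult[OF B x y] by simp
qed (rule psd[OF y])

lemma scalar_prod_cauchy_schwarz:
  fixes x y :: "real vec"
  assumes "x \<in> carrier_vec n" "y \<in> carrier_vec n"
  shows "(x \<bullet> y)\<^sup>2 \<le> (x \<bullet> x) * (y \<bullet> y)"
  using psd_form_cauchy_schwarz[of "1\<^sub>m n" n x y] assms scalar_prod_self_nonneg by simp

lemma scalar_prod_self_ge_of_le_scalar_prod:
  fixes u w :: "real vec"
  assumes u: "u \<in> carrier_vec n" and w: "w \<in> carrier_vec n" and "0 \<le> c" and cuw: "c * (u \<bullet> u) \<le> u \<bullet> w"
  shows "c\<^sup>2 * (u \<bullet> u) \<le> w \<bullet> w"
proof (cases "u \<bullet> u = 0")
  case False
  then have uu: "0 < u \<bullet> u" using scalar_prod_self_nonneg[of u] by linarith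
  have "(c * (u \<bullet> u))\<^sup>2 \<le> (u \<bullet> w)\<^sup>2"
    using cuw \<open>0 \<le> c\<close> uu by (intro power_mono) auto
  also have "\<dots> \<le> (u \<bullet> u) * (w \<bullet> w)" by (rule scalar_prod_cauchy_schwarz[OF u w])
  finally show ?thesis using uu by (simp add: power2_eq_square mult_ac)
qed (simp add: scalar_prod_self_nonneg)

lemma sq_mult_le_of_scalar_prod_bounds:
  fixes u w :: "real vec"
  assumes u: "u \<in> carrier_vec n" and w: "w \<in> carrier_vec n" and uu: "0 < u \<bullet> u"
    and g: "g * (w \<bullet> w) \<le> d * (u \<bullet> w)" and s: "s * (u \<bullet> u) \<le> w \<bullet> w"
    and "0 \<le> g" "0 \<le> s"
  shows "g\<^sup>2 * s \<le> d\<^sup>2"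
proof (cases "w \<bullet> w = 0")
  case True
  then have "s * (u \<bullet> u) \<le> 0" using s by simp
  then have "s = 0" using uu \<open>0 \<le> s\<close> by (simp add: mult_le_0_iff)
  then show ?thesis by simp
next
  case False
  then have ww: "0 < w \<bullet> w" using scalar_prod_self_nonneg[of w] by linarith
  have "(g * (w \<bullet> w))\<^sup>2 \<le> (d * (u \<bullet> w))\<^sup>2"
    using g \<open>0 \<le> g\<close> ww by (intro power_mono) auto
  also have "\<dots> \<le> d\<^sup>2 * ((u \<bullet> u) * (w \<bullet> w))"
    unfolding power_mult_distrib using scalar_prod_cauchy_schwarz[OF u w] by (intro mult_left_mono) auto
  finally have "g\<^sup>2 * (w \<bullet> w) * (w \<bullet> w) \<le> d\<^sup>2 * (u \<bullet> u) * (w \<bullet> w)"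
    by (simp add: power_mult_distrib power2_eq_square mult_ac)
  then have "g\<^sup>2 * (w \<bullet> w) \<le> d\<^sup>2 * (u \<bullet> u)" using ww by (rule mult_right_le_imp_le)
  moreover have "g\<^sup>2 * s * (u \<bullet> u) \<le> g\<^sup>2 * (w \<bullet> w)"
    using s by (simp add: mult.assoc mult_left_mono)
  ultimately have "g\<^sup>2 * s * (u \<bullet> u) \<le> d\<^sup>2 * (u \<bullet> u)" by linarith
  then show ?thesis using uu by simp
qed

section \<open>Invertible matrices and the smallest eigenvalue\<close>

lemma invertible_mat_vec_lower_bound:
  fixes P :: "real mat"
  assumes P: "P \<in> carrier_mat n n" and "det P \<noteq> 0"
  obtains s where "s > 0" "\<And>u. u \<in> carrier_vec n \<Longrightarrow> s * (u \<bullet> u) \<le> (P *\<^sub>v u) \<bullet> (P *\<^sub>v u)"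
proof -
  from det_non_zero_imp_unit[OF assms, of "()"]
  obtain C where C: "C \<in> carrier_mat n n" and CP: "C * P = 1\<^sub>m n"
    unfolding Units_def ring_mat_def by auto
  obtain b where "b > 0" and b: "\<And>w. w \<in> carrier_vec n \<Longrightarrow> \<bar>w \<bullet> ((C\<^sup>T * C) *\<^sub>v w)\<bar> \<le> b * (w \<bullet> w)"
    using quadratic_form_bounded[of "C\<^sup>T * C" n] C by auto
  have "1 / b * (u \<bullet> u) \<le> (P *\<^sub>v u) \<bullet> (P *\<^sub>v u)" if u: "u \<in> carrier_vec n" for u
  proof -
    define w where "w = P *\<^sub>v u"
    have w: "w \<in> carrier_vec n" unfolding w_def using P u by simp
    have "u = C *\<^sub>v w" unfolding w_def using C P u CP by (simp flip: assoc_mult_mat_vec)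
    then have "u \<bullet> u = w \<bullet> ((C\<^sup>T * C) *\<^sub>v w)" by (simp add: mult_mat_vec_self_scalar_prod[OF C w])
    also have "\<dots> \<le> b * (w \<bullet> w)" using b[OF w] by simp
    finally show ?thesis unfolding w_def using \<open>b > 0\<close> by (simp add: field_simps)
  qed
  then show ?thesis using that[of "1 / b"] \<open>b > 0\<close> by simp
qed

lemma psd_invertible_form_lower_bound:
  fixes B :: "real mat"
  assumes B: "B \<in> carrier_mat n n" "B\<^sup>T = B" and "det B \<noteq> 0"
    and psd: "\<And>z. z \<in> carrier_vec n \<Longrightarrow> 0 \<le> z \<bullet> (B *\<^sub>v z)"
  obtains \<epsilon> where "\<epsilon> > 0" "\<And>y. y \<in> carrier_vec n \<Longrightarrow> \<epsilon> * (y \<bullet> y) \<le> y \<bullet> (B *\<^sub>v y)"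
proof -
  obtain s where "s > 0" and s: "\<And>y. y \<in> carrier_vec n \<Longrightarrow> s * (y \<bullet> y) \<le> (B *\<^sub>v y) \<bullet> (B *\<^sub>v y)"
    using invertible_mat_vec_lower_bound[OF B(1) \<open>det B \<noteq> 0\<close>] by blast
  obtain b where "b > 0" and b: "\<And>x. x \<in> carrier_vec n \<Longrightarrow> \<bar>x \<bullet> (B *\<^sub>v x)\<bar> \<le> b * (x \<bullet> x)"
    using quadratic_form_bounded[OF B(1)] by blast
  have "s / b * (y \<bullet> y) \<le> y \<bullet> (B *\<^sub>v y)" if y: "y \<in> carrier_vec n" for y
  proof -
    define x where "x = B *\<^sub>v y"
    have x: "x \<in> carrier_vec n" unfolding x_def using B y by simp
    have xBy: "x \<bullet> (B *\<^sub>v y) = x \<bullet> x" unfolding x_def ..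
    have "(x \<bullet> x)\<^sup>2 \<le> (x \<bullet> (B *\<^sub>v x)) * (y \<bullet> (B *\<^sub>v y))"
      using psd_form_cauchy_schwarz[OF B psd x y] unfolding xBy .
    also have "\<dots> \<le> b * (x \<bullet> x) * (y \<bullet> (B *\<^sub>v y))"
      using b[OF x] psd[OF y] by (intro mult_right_mono) auto
    finally have "x \<bullet> x \<le> b * (y \<bullet> (B *\<^sub>v y))"
      using scalar_prod_self_nonneg[of x] psd[OF y] \<open>b > 0\<close>
      by (cases "x \<bullet> x = 0") (auto simp: power2_eq_square)
    with s[OF y] have "s * (y \<bullet> y) \<le> b * (y \<bullet> (B *\<^sub>v y))" unfolding x_def by simp
    then show ?thesis using \<open>b > 0\<close> by (simp add: field_simps)
  qed
  then show ?thesis using that[of "s / b"] \<open>s > 0\<close> \<open>b > 0\<close> by simp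
qed

lemma quadratic_form_ge_of_unit_vectors:
  fixes M :: "real mat"
  assumes M: "M \<in> carrier_mat n n"
    and unit: "\<And>z. z \<in> carrier_vec n \<Longrightarrow> z \<bullet> z = 1 \<Longrightarrow> m \<le> z \<bullet> (M *\<^sub>v z)"
    and y: "y \<in> carrier_vec n"
  shows "m * (y \<bullet> y) \<le> y \<bullet> (M *\<^sub>v y)"
proof (cases "y = 0\<^sub>v n")
  case True
  then show ?thesis using M by simp
next
  case False
  then have pos: "0 < y \<bullet> y"
    using scalar_prod_self_nonneg[of y] scalar_prod_self_eq_0_iff[OF y] by linarith
  define z where "z = (1 / sqrt (y \<bullet> y)) \<cdot>\<^sub>v y"
  have z: "z \<in> carrier_vec n" unfolding z_def using y by simp
  have "z \<bullet> z = 1"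
    unfolding z_def using y pos by (simp add: power2_eq_square[symmetric])
  moreover have "z \<bullet> (M *\<^sub>v z) = (y \<bullet> (M *\<^sub>v y)) / (y \<bullet> y)"
    unfolding z_def using y M pos by (simp add: mult_mat_vec[OF M y] power2_eq_square[symmetric])
  ultimately have "m \<le> (y \<bullet> (M *\<^sub>v y)) / (y \<bullet> y)" using unit[OF z] by simp
  then show ?thesis using pos by (simp add: pos_le_divide_eq)
qed

text \<open>The minimum of the Rayleigh quotient is an eigenvalue: otherwise \<open>A - m I\<close> would be
  positive semidefinite and invertible, hence bounded below by some \<open>\<epsilon> > 0\<close> on the unit sphere,
  contradicting the minimality of \<open>m\<close>.\<close>
lemma symmetric_mat_min_rayleigh_eigenvalue:
  fixes A :: "real mat"
  assumes A: "A \<in> carrier_mat n n" "A\<^sup>T = A" and "0 < n"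
  obtains m where "eigenvalue A m" "\<And>y. y \<in> carrier_vec n \<Longrightarrow> m * (y \<bullet> y) \<le> y \<bullet> (A *\<^sub>v y)"
proof -
  define S where "S = {y \<bullet> (A *\<^sub>v y) | y. y \<in> carrier_vec n \<and> y \<bullet> y = 1}"
  define m where "m = Inf S"
  have "unit_vec n 0 \<bullet> (A *\<^sub>v unit_vec n 0) \<in> S"
    unfolding S_def using \<open>0 < n\<close> by auto
  then have "S \<noteq> {}" by blast
  obtain b where b: "\<And>y. y \<in> carrier_vec n \<Longrightarrow> \<bar>y \<bullet> (A *\<^sub>v y)\<bar> \<le> b * (y \<bullet> y)"
    using quadratic_form_bounded[OF A(1)] by blast
  have "bdd_below S"
  proof (rule bdd_belowI)
    fix s assume "s \<in> S"
    then obtain y where y: "y \<in> carrier_vec n" "y \<bullet> y = 1" and "s = y \<bullet> (A *\<^sub>v y)"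
      unfolding S_def by blast
    then show "- b \<le> s" using b[OF y(1)] by (simp add: abs_le_iff)
  qed
  then have lower: "m * (y \<bullet> y) \<le> y \<bullet> (A *\<^sub>v y)" if "y \<in> carrier_vec n" for y
    using that by (intro quadratic_form_ge_of_unit_vectors[OF A(1)])
      (auto simp: m_def S_def intro!: cInf_lower)
  define B where "B = char_matrix A m"
  have B: "B \<in> carrier_mat n n" unfolding B_def using A by simp
  have B_form: "y \<bullet> (B *\<^sub>v y) = y \<bullet> (A *\<^sub>v y) - m * (y \<bullet> y)" if y: "y \<in> carrier_vec n" for y
    unfolding B_def char_matrix_def using A y
    by (simp add: add_mult_distrib_mat_vec[of _ n n] scalar_prod_add_distrib[of _ n]
        smult_mat_mult_mat_vec[of _ n n])
  have "(- m \<cdot>\<^sub>m 1\<^sub>m n)\<^sup>T = - m \<cdot>\<^sub>m 1\<^sub>m n" by (intro eq_matI) auto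
  then have "B\<^sup>T = B" unfolding B_def char_matrix_def using A by (simp add: transpose_add)
  have "det B = 0"
  proof (rule ccontr)
    assume "det B \<noteq> 0"
    moreover have "0 \<le> y \<bullet> (B *\<^sub>v y)" if "y \<in> carrier_vec n" for y
      using lower[OF that] B_form[OF that] by simp
    ultimately obtain \<epsilon> where "\<epsilon> > 0"
      and \<epsilon>: "\<And>y. y \<in> carrier_vec n \<Longrightarrow> \<epsilon> * (y \<bullet> y) \<le> y \<bullet> (B *\<^sub>v y)"
      using psd_invertible_form_lower_bound[OF B \<open>B\<^sup>T = B\<close>] by blast
    have "m + \<epsilon> \<le> Inf S"
    proof (rule cInf_greatest[OF \<open>S \<noteq> {}\<close>])
      fix s assume "s \<in> S"
      then obtain y where y: "y \<in> carrier_vec n" "y \<bullet> y = 1" and "s = y \<bullet> (A *\<^sub>v y)"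
        unfolding S_def by blast
      then show "m + \<epsilon> \<le> s" using \<epsilon>[OF y(1)] B_form[OF y(1)] by simp
    qed
    then show False using \<open>\<epsilon> > 0\<close> unfolding m_def by simp
  qed
  then have "eigenvalue A m" unfolding B_def using eigenvalue_det[OF A(1)] by simp
  then show ?thesis using that lower by blast
qed

lemma finite_eigenvalues:
  fixes A :: "real mat"
  assumes A: "A \<in> carrier_mat n n"
  shows "finite {x. eigenvalue A x}"
proof -
  have "char_poly A \<noteq> 0" using degree_monic_char_poly[OF A] by auto
  then have "finite {x. poly (char_poly A) x = 0}" by (rule poly_roots_finite)
  then show ?thesis using eigenvalue_root_char_poly[OF A] by simp
qed

lemma lambda_K_mult_le_quadratic_form:
  fixes A :: "real mat"
  assumes A: "A \<in> carrier_mat n n" "A\<^sup>T = A" and "0 < n" and y: "y \<in> carrier_vec n"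
  shows "lambda_K A * (y \<bullet> y) \<le> y \<bullet> (A *\<^sub>v y)"
proof -
  obtain m where "eigenvalue A m" and m: "m * (y \<bullet> y) \<le> y \<bullet> (A *\<^sub>v y)"
    using symmetric_mat_min_rayleigh_eigenvalue[OF A \<open>0 < n\<close>] y by metis
  then have "lambda_K A \<le> m"
    unfolding lambda_K_def using finite_eigenvalues[OF A(1)] by (intro Min_le) auto
  then have "lambda_K A * (y \<bullet> y) \<le> m * (y \<bullet> y)"
    using scalar_prod_self_nonneg[of y] by (rule mult_right_mono)
  then show ?thesis using m by linarith
qed

lemma lambda_K_gram_le:
  fixes A :: "real mat"
  assumes A: "A \<in> carrier_mat n K" and "0 < K" and w: "w \<in> carrier_vec K"
  shows "lambda_K (A\<^sup>T * A) * (w \<bullet> w) \<le> (A *\<^sub>v w) \<bullet> (A *\<^sub>v w)"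
proof -
  have "(A\<^sup>T * A)\<^sup>T = A\<^sup>T * A" using A by (simp add: transpose_mult[of _ K n])
  then show ?thesis
    using lambda_K_mult_le_quadratic_form[of "A\<^sup>T * A" K w] A w \<open>0 < K\<close>
    by (simp add: mult_mat_vec_self_scalar_prod[OF A w])
qed

lemma lambda_K_sq_le:
  fixes P :: "real mat"
  assumes P: "P \<in> carrier_mat K K" "P\<^sup>T = P" and "0 < K" and u: "u \<in> carrier_vec K"
    and "0 \<le> c" "c \<le> lambda_K P"
  shows "c\<^sup>2 * (u \<bullet> u) \<le> (P *\<^sub>v u) \<bullet> (P *\<^sub>v u)"
proof (rule scalar_prod_self_ge_of_le_scalar_prod[OF u _ \<open>0 \<le> c\<close>])
  have "c * (u \<bullet> u) \<le> lambda_K P * (u \<bullet> u)"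
    using \<open>c \<le> lambda_K P\<close> scalar_prod_self_nonneg[of u] by (rule mult_right_mono)
  also have "\<dots> \<le> u \<bullet> (P *\<^sub>v u)" by (rule lambda_K_mult_le_quadratic_form[OF P \<open>0 < K\<close> u])
  finally show "c * (u \<bullet> u) \<le> u \<bullet> (P *\<^sub>v u)" .
qed (use P u in simp)

section \<open>Eigenvalues of \<open>A P A\<^sup>T\<close>\<close>

lemma eigdecomp_col_eigenvector:
  assumes ed: "eigdecomp n K H V d" and k: "k < K"
  shows "col V k \<in> carrier_vec n" "col V k \<bullet> col V k = 1" "H *\<^sub>v col V k = d k \<cdot>\<^sub>v col V k"
proof -
  define D where "D = mat K K (\<lambda>(k,l). if k = l then d k else (0 :: real))"
  have V: "V \<in> carrier_mat n K" and VV: "V\<^sup>T * V = 1\<^sub>m K" and H: "H = V * D * V\<^sup>T"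
    using ed unfolding eigdecomp_def D_def by auto
  have D: "D \<in> carrier_mat K K" unfolding D_def by simp
  show "col V k \<in> carrier_vec n" unfolding carrier_vec_def using V by simp
  have "col V k \<bullet> col V k = (V\<^sup>T * V) $$ (k,k)" using V k by simp
  then show "col V k \<bullet> col V k = 1" unfolding VV using k by simp
  have "H * V = V * D * (V\<^sup>T * V)" unfolding H using V D
    by (metis assoc_mult_mat mult_carrier_mat transpose_carrier_mat)
  then have HV: "H * V = V * D" unfolding VV using V D by simp
  have "col D k = d k \<cdot>\<^sub>v unit_vec K k"
    unfolding D_def using k by (intro eq_vecI) auto
  then have "col (V * D) k = d k \<cdot>\<^sub>v col V k"
    using V D k by (intro eq_vecI) auto
  then show "H *\<^sub>v col V k = d k \<cdot>\<^sub>v col V k"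
    using col_mult2[of H n n V K k] H V D k HV by simp
qed

lemma eigenvalue_abs_le:
  fixes H :: "real mat"
  assumes H: "H \<in> carrier_mat n n" and v: "v \<in> carrier_vec n" "v \<bullet> v = 1"
    and ev: "H *\<^sub>v v = d \<cdot>\<^sub>v v" and b: "\<And>i j. i < n \<Longrightarrow> j < n \<Longrightarrow> \<bar>H $$ (i,j)\<bar> \<le> b"
  shows "\<bar>d\<bar> \<le> n * b"
proof -
  have "d = v \<bullet> (H *\<^sub>v v)" unfolding ev using v by simp
  then show ?thesis using quadratic_form_abs_le[OF H v(1) b] v(2) by (simp add: mult.commute)
qed

lemma eigenvalue_lower_bound_factored:
  fixes A P :: "real mat"
  assumes A: "A \<in> carrier_mat n K" and P: "P \<in> carrier_mat K K"
    and v: "v \<in> carrier_vec n" "v \<noteq> 0\<^sub>v n" and ev: "(A * P * A\<^sup>T) *\<^sub>v v = d \<cdot>\<^sub>v v" and "d \<noteq> 0"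
    and g: "\<And>w. w \<in> carrier_vec K \<Longrightarrow> g * (w \<bullet> w) \<le> (A *\<^sub>v w) \<bullet> (A *\<^sub>v w)"
    and s: "\<And>u. u \<in> carrier_vec K \<Longrightarrow> s * (u \<bullet> u) \<le> (P *\<^sub>v u) \<bullet> (P *\<^sub>v u)"
    and "0 \<le> g" "0 \<le> s"
  shows "g * sqrt s \<le> \<bar>d\<bar>"
proof -
  define u where "u = A\<^sup>T *\<^sub>v v"
  define w where "w = P *\<^sub>v u"
  have u: "u \<in> carrier_vec K" unfolding u_def using A v by simp
  have w: "w \<in> carrier_vec K" unfolding w_def using P u by simp
  have "(A * P * A\<^sup>T) *\<^sub>v v = (A * P) *\<^sub>v u"
    unfolding u_def by (rule assoc_mult_mat_vec[of _ n K _ n]) (use A P v in auto)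
  also have "\<dots> = A *\<^sub>v w"
    unfolding w_def by (rule assoc_mult_mat_vec[of _ n K _ K]) (use A P u in auto)
  finally have Aw: "A *\<^sub>v w = d \<cdot>\<^sub>v v" unfolding ev ..
  have uw: "d * (u \<bullet> w) = (A *\<^sub>v w) \<bullet> (A *\<^sub>v w)"
    using transpose_vec_mult_scalar[OF A w v(1)] v(1) unfolding u_def Aw by simp
  have "0 < v \<bullet> v"
    using scalar_prod_self_nonneg[of v] scalar_prod_self_eq_0_iff[OF v(1)] v(2) by linarith
  then have "u \<bullet> w \<noteq> 0" using uw \<open>d \<noteq> 0\<close> v(1) unfolding Aw by simp
  then have uu: "0 < u \<bullet> u"
    using scalar_prod_self_nonneg[of u] scalar_prod_self_eq_0_iff[OF u] w
    by (metis order_less_le scalar_prod_left_zero)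
  have "g\<^sup>2 * s \<le> d\<^sup>2"
  proof (rule sq_mult_le_of_scalar_prod_bounds[OF u w uu _ _ \<open>0 \<le> g\<close> \<open>0 \<le> s\<close>])
    show "g * (w \<bullet> w) \<le> d * (u \<bullet> w)" using g[OF w] unfolding uw .
    show "s * (u \<bullet> u) \<le> w \<bullet> w" unfolding w_def by (rule s[OF u])
  qed
  then have "(g * sqrt s)\<^sup>2 \<le> d\<^sup>2" using \<open>0 \<le> s\<close> by (simp add: power_mult_distrib)
  then show ?thesis using power2_le_imp_le[of "g * sqrt s" "\<bar>d\<bar>"] by simp
qed

section \<open>The mixed membership model\<close>

lemma membership_mat_carrier: "membership_mat n K Pm \<Longrightarrow> Pm \<in> carrier_mat n K"
  unfolding membership_mat_def by simp

lemma conn_mat_carrier: "conn_mat K P \<Longrightarrow> P \<in> carrier_mat K K"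
  unfolding conn_mat_def by simp

lemma membership_conn_index_bounds:
  assumes Pm: "membership_mat n K Pm" and P: "conn_mat K P" and "i < n" "j < n"
  shows "0 \<le> (Pm * P * Pm\<^sup>T) $$ (i,j)" "(Pm * P * Pm\<^sup>T) $$ (i,j) \<le> 1"
proof -
  have nonneg: "\<And>i k. i < n \<Longrightarrow> k < K \<Longrightarrow> 0 \<le> Pm $$ (i,k)"
    and rows: "\<And>i. i < n \<Longrightarrow> (\<Sum>k<K. Pm $$ (i,k)) = 1"
    and P01: "\<And>k l. k < K \<Longrightarrow> l < K \<Longrightarrow> 0 \<le> P $$ (k,l) \<and> P $$ (k,l) \<le> 1"
    using Pm P unfolding membership_mat_def conn_mat_def by auto
  note entry = mult_mult_transpose_index[OF membership_mat_carrier[OF Pm] conn_mat_carrier[OF P] \<open>i < n\<close> \<open>j < n\<close>]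
  show "0 \<le> (Pm * P * Pm\<^sup>T) $$ (i,j)"
    unfolding entry using nonneg P01 \<open>i < n\<close> \<open>j < n\<close> by (intro sum_nonneg mult_nonneg_nonneg) auto
  have "(Pm * P * Pm\<^sup>T) $$ (i,j) \<le> (\<Sum>k<K. \<Sum>l<K. Pm $$ (i,k) * Pm $$ (j,l))"
    unfolding entry
  proof (intro sum_mono)
    fix k l assume "k \<in> {..<K}" "l \<in> {..<K}"
    then have "Pm $$ (i,k) * P $$ (k,l) \<le> Pm $$ (i,k)"
      using nonneg P01 \<open>i < n\<close> by (intro mult_left_le) auto
    then show "Pm $$ (i,k) * P $$ (k,l) * Pm $$ (j,l) \<le> Pm $$ (i,k) * Pm $$ (j,l)"
      using nonneg \<open>j < n\<close> \<open>l \<in> {..<K}\<close> by (intro mult_right_mono) auto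
  qed
  also have "\<dots> = (\<Sum>k<K. Pm $$ (i,k)) * (\<Sum>l<K. Pm $$ (j,l))" by (simp add: sum_product)
  finally show "(Pm * P * Pm\<^sup>T) $$ (i,j) \<le> 1" using rows \<open>i < n\<close> \<open>j < n\<close> by simp
qed

lemma alpha_sq_le:
  assumes H: "H \<in> carrier_mat n n" and "0 < n" and b: "\<And>i j. i < n \<Longrightarrow> j < n \<Longrightarrow> H $$ (i,j) \<le> b"
  shows "alpha_sq H \<le> n * b"
  unfolding alpha_sq_def
proof (rule Max.boundedI)
  fix a assume "a \<in> (\<lambda>j. \<Sum>i<dim_row H. H $$ (i,j) * (1 - H $$ (i,j))) ` {..<dim_col H}"
  then obtain j where "j < n" and a: "a = (\<Sum>i<n. H $$ (i,j) * (1 - H $$ (i,j)))" using H by auto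
  have "a \<le> (\<Sum>i<n. b)" unfolding a
  proof (intro sum_mono)
    fix i assume "i \<in> {..<n}"
    moreover have "H $$ (i,j) * (1 - H $$ (i,j)) \<le> H $$ (i,j)" by (simp add: algebra_simps)
    ultimately show "H $$ (i,j) * (1 - H $$ (i,j)) \<le> b" using b \<open>j < n\<close> by force
  qed
  then show "a \<le> n * b" by simp
qed (use H \<open>0 < n\<close> in auto)

lemma pure_nodes_row:
  assumes Pm: "membership_mat n K Pm" and i: "i \<in> pure_nodes n Pm k" and "k < K" "l < K"
  shows "Pm $$ (i,l) = (if l = k then 1 else 0)"
proof -
  have "i < n" and ik: "Pm $$ (i,k) = 1" using i unfolding pure_nodes_def by auto
  then have nonneg: "\<And>l. l < K \<Longrightarrow> 0 \<le> Pm $$ (i,l)" and rows: "(\<Sum>l<K. Pm $$ (i,l)) = 1"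
    using Pm unfolding membership_mat_def by auto
  have "(\<Sum>l<K. Pm $$ (i,l)) = Pm $$ (i,k) + (\<Sum>l\<in>{..<K}-{k}. Pm $$ (i,l))"
    using \<open>k < K\<close> by (simp add: sum.remove)
  then have "(\<Sum>l\<in>{..<K}-{k}. Pm $$ (i,l)) = 0" using rows ik by simp
  then have "\<forall>l\<in>{..<K}-{k}. Pm $$ (i,l) = 0"
    using nonneg by (subst sum_nonneg_eq_0_iff[symmetric]) auto
  then show ?thesis using ik \<open>l < K\<close> by auto
qed

lemma pure_nodes_disjoint:
  assumes "membership_mat n K Pm" "k < K" "l < K" "k \<noteq> l"
  shows "pure_nodes n Pm k \<inter> pure_nodes n Pm l = {}"
  using pure_nodes_row[OF assms(1) _ assms(2,3)] assms(4) unfolding pure_nodes_def by force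

lemma pure_nodes_mult_mat_vec_index:
  assumes Pm: "membership_mat n K Pm" and i: "i \<in> pure_nodes n Pm k" and "k < K"
    and w: "w \<in> carrier_vec K"
  shows "(Pm *\<^sub>v w) $ i = w $ k"
proof -
  have "i < n" using i unfolding pure_nodes_def by simp
  then have "(Pm *\<^sub>v w) $ i = (\<Sum>l<K. Pm $$ (i,l) * w $ l)"
    using membership_mat_carrier[OF Pm] w by (simp add: scalar_prod_def row_def atLeast0LessThan)
  also have "\<dots> = (\<Sum>l<K. if l = k then w $ k else 0)"
    using pure_nodes_row[OF Pm i \<open>k < K\<close>] by (intro sum.cong) auto
  finally show ?thesis using \<open>k < K\<close> by simp
qed

text \<open>Each pure node of community \<open>k\<close> contributes \<open>w\<^sub>k\<^sup>2\<close> to \<open>\<parallel>\<Pi> w\<parallel>\<^sup>2\<close>.\<close>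
lemma membership_mat_vec_norm_lower_bound:
  fixes w :: "real vec"
  assumes Pm: "membership_mat n K Pm" and w: "w \<in> carrier_vec K"
    and pure: "\<And>k. k < K \<Longrightarrow> c * real n \<le> real (card (pure_nodes n Pm k))"
  shows "c * real n * (w \<bullet> w) \<le> (Pm *\<^sub>v w) \<bullet> (Pm *\<^sub>v w)"
proof -
  let ?N = "pure_nodes n Pm" and ?f = "\<lambda>i. ((Pm *\<^sub>v w) $ i)\<^sup>2"
  have "c * real n * (w \<bullet> w) = (\<Sum>k<K. c * real n * (w $ k)\<^sup>2)"
    using w by (simp add: scalar_prod_lessThan sum_distrib_left power2_eq_square)
  also have "\<dots> \<le> (\<Sum>k<K. real (card (?N k)) * (w $ k)\<^sup>2)"
    using pure by (intro sum_mono mult_right_mono) auto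
  also have "\<dots> = (\<Sum>k<K. \<Sum>i\<in>?N k. ?f i)"
    using pure_nodes_mult_mat_vec_index[OF Pm _ _ w] by (intro sum.cong) auto
  also have "\<dots> = sum ?f (\<Union>k<K. ?N k)"
    using pure_nodes_disjoint[OF Pm] by (intro sum.UNION_disjoint[symmetric]) (auto simp: pure_nodes_def)
  also have "\<dots> \<le> (\<Sum>i<n. ?f i)"
    by (intro sum_mono2) (auto simp: pure_nodes_def)
  also have "\<dots> = (Pm *\<^sub>v w) \<bullet> (Pm *\<^sub>v w)"
    using scalar_prod_lessThan[of "Pm *\<^sub>v w" n] membership_mat_carrier[OF Pm] w
    by (simp add: power2_eq_square)
  finally show ?thesis .
qed

lemma mmsb_spectral_bounds:
  fixes Pm P V :: "real mat" and \<theta> :: real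
  assumes "0 < K" "0 < c0" "0 < n" "0 < \<theta>" and Pm: "membership_mat n K Pm" and P: "conn_mat K P"
    and ed: "eigdecomp n K (\<theta> \<cdot>\<^sub>m (Pm * P * Pm\<^sup>T)) V d"
    and gram: "c0 * real n \<le> lambda_K (Pm\<^sup>T * Pm)" and conn: "c0 \<le> lambda_K P"
  shows "alpha_sq (\<theta> \<cdot>\<^sub>m (Pm * P * Pm\<^sup>T)) \<le> real n * \<theta>"
    and "\<And>k. k < K \<Longrightarrow> c0\<^sup>2 * (real n * \<theta>) \<le> \<bar>d k\<bar>"
    and "\<And>k. k < K \<Longrightarrow> \<bar>d k\<bar> \<le> real n * \<theta>"
proof -
  note Pmc = membership_mat_carrier[OF Pm] and Pc = conn_mat_carrier[OF P]
  have "P\<^sup>T = P" using P unfolding conn_mat_def by simp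
  define H where "H = \<theta> \<cdot>\<^sub>m (Pm * P * Pm\<^sup>T)"
  have Hc: "H \<in> carrier_mat n n" unfolding H_def using Pmc Pc by simp
  have Hb: "\<bar>H $$ (i,j)\<bar> \<le> \<theta>" if "i < n" "j < n" for i j
    using membership_conn_index_bounds[OF Pm P that] Pmc Pc that \<open>0 < \<theta>\<close>
    unfolding H_def by (simp add: abs_mult mult_left_le)
  then show "alpha_sq (\<theta> \<cdot>\<^sub>m (Pm * P * Pm\<^sup>T)) \<le> real n * \<theta>"
    unfolding H_def[symmetric] using alpha_sq_le[OF Hc \<open>0 < n\<close>] by (simp add: abs_le_iff)
  fix k assume "k < K"
  note eig = eigdecomp_col_eigenvector[OF ed \<open>k < K\<close>, folded H_def]
  show "\<bar>d k\<bar> \<le> real n * \<theta>" by (rule eigenvalue_abs_le[OF Hc eig Hb])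
  have "H = Pm * (\<theta> \<cdot>\<^sub>m P) * Pm\<^sup>T"
    unfolding H_def mult_smult_distrib[OF Pmc Pc]
    by (rule mult_smult_assoc_mat[symmetric]) (use Pmc Pc in auto)
  moreover have "c0 * real n * (w \<bullet> w) \<le> (Pm *\<^sub>v w) \<bullet> (Pm *\<^sub>v w)" if "w \<in> carrier_vec K" for w
    using lambda_K_gram_le[OF Pmc \<open>0 < K\<close> that] gram scalar_prod_self_nonneg[of w]
    by (meson mult_right_mono order_trans)
  moreover have "(\<theta> * c0)\<^sup>2 * (u \<bullet> u) \<le> ((\<theta> \<cdot>\<^sub>m P) *\<^sub>v u) \<bullet> ((\<theta> \<cdot>\<^sub>m P) *\<^sub>v u)"
    if u: "u \<in> carrier_vec K" for u
  proof -
    have "\<theta>\<^sup>2 * (c0\<^sup>2 * (u \<bullet> u)) \<le> \<theta>\<^sup>2 * ((P *\<^sub>v u) \<bullet> (P *\<^sub>v u))"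
      using lambda_K_sq_le[OF Pc \<open>P\<^sup>T = P\<close> \<open>0 < K\<close> u _ conn] \<open>0 < c0\<close> by (intro mult_left_mono) auto
    then show ?thesis using Pc u
      by (simp add: smult_mat_mult_mat_vec[OF Pc u] power_mult_distrib power2_eq_square mult_ac)
  qed
  ultimately have "c0 * real n * sqrt ((\<theta> * c0)\<^sup>2) \<le> \<bar>d k\<bar>"
    using eig ed \<open>k < K\<close> \<open>0 < c0\<close> Pmc Pc unfolding eigdecomp_def
    by (intro eigenvalue_lower_bound_factored[of Pm n K "\<theta> \<cdot>\<^sub>m P" "col V k"])
      (auto simp: scalar_prod_self_eq_0_iff[symmetric])
  moreover have "sqrt ((\<theta> * c0)\<^sup>2) = \<theta> * c0" using \<open>0 < \<theta>\<close> \<open>0 < c0\<close> by simp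
  ultimately show "c0\<^sup>2 * (real n * \<theta>) \<le> \<bar>d k\<bar>" by (simp add: power2_eq_square mult_ac)
qed

section \<open>The degree-corrected mixed membership model\<close>

lemma theta_min_le: "i < n \<Longrightarrow> theta_min n th \<le> th i"
  unfolding theta_min_def by (intro Min_le) auto

lemma theta_min_pos: "0 < n \<Longrightarrow> (\<And>i. i < n \<Longrightarrow> 0 < th i) \<Longrightarrow> 0 < theta_min n th"
  unfolding theta_min_def by (subst Min_gr_iff) auto

lemma theta_max_ge: "i < n \<Longrightarrow> th i \<le> theta_max n th"
  unfolding theta_max_def by (intro Max_ge) auto

lemma diag_of_carrier: "diag_of n th \<in> carrier_mat n n"
  unfolding diag_of_def by simp

lemma diag_of_mult_vec_index:
  assumes "x \<in> carrier_vec n" "i < n"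
  shows "(diag_of n th *\<^sub>v x) $ i = th i * x $ i"
proof -
  have "row (diag_of n th) i = th i \<cdot>\<^sub>v unit_vec n i"
    unfolding diag_of_def using assms by (intro eq_vecI) auto
  then show ?thesis using assms unfolding diag_of_def by simp
qed

lemma diag_of_mult_index:
  assumes "M \<in> carrier_mat n m" "i < n" "k < m"
  shows "(diag_of n th * M) $$ (i,k) = th i * M $$ (i,k)"
  using diag_of_mult_vec_index[of "col M k" n i th] assms unfolding diag_of_def
  by (simp add: mult_mat_vec_def)

lemma diag_of_mult_vec_norm_lower_bound:
  fixes M :: "real mat"
  assumes M: "M \<in> carrier_mat n m" and w: "w \<in> carrier_vec m"
    and t: "\<And>i. i < n \<Longrightarrow> t \<le> th i" "0 \<le> t"
  shows "t\<^sup>2 * ((M *\<^sub>v w) \<bullet> (M *\<^sub>v w)) \<le> ((diag_of n th * M) *\<^sub>v w) \<bullet> ((diag_of n th * M) *\<^sub>v w)"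
proof -
  have Mw: "M *\<^sub>v w \<in> carrier_vec n" using M w by simp
  have "t\<^sup>2 * ((M *\<^sub>v w) \<bullet> (M *\<^sub>v w)) = (\<Sum>i<n. t\<^sup>2 * ((M *\<^sub>v w) $ i)\<^sup>2)"
    by (simp add: scalar_prod_lessThan[OF Mw Mw] sum_distrib_left power2_eq_square)
  also have "\<dots> \<le> (\<Sum>i<n. (th i * (M *\<^sub>v w) $ i)\<^sup>2)"
    unfolding power_mult_distrib using t by (intro sum_mono mult_right_mono power_mono) auto
  also have "\<dots> = (\<Sum>i<n. (diag_of n th *\<^sub>v (M *\<^sub>v w)) $ i * (diag_of n th *\<^sub>v (M *\<^sub>v w)) $ i)"
  proof (intro sum.cong refl)
    fix i assume "i \<in> {..<n}"
    then have "(diag_of n th *\<^sub>v (M *\<^sub>v w)) $ i = th i * (M *\<^sub>v w) $ i"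
      by (intro diag_of_mult_vec_index[OF Mw]) simp
    then show "(th i * (M *\<^sub>v w) $ i)\<^sup>2
        = (diag_of n th *\<^sub>v (M *\<^sub>v w)) $ i * (diag_of n th *\<^sub>v (M *\<^sub>v w)) $ i"
      by (simp only: power2_eq_square)
  qed
  also have "\<dots> = (diag_of n th *\<^sub>v (M *\<^sub>v w)) \<bullet> (diag_of n th *\<^sub>v (M *\<^sub>v w))"
    using mult_mat_vec_carrier[OF diag_of_carrier Mw] by (intro scalar_prod_lessThan[symmetric])
  finally show ?thesis using assoc_mult_mat_vec[OF diag_of_carrier M w] by simp
qed

lemma H_dcmm_factor:
  assumes Pm: "Pm \<in> carrier_mat n K" and P: "P \<in> carrier_mat K K"
  shows "H_dcmm n th Pm P = (diag_of n th * Pm) * P * (diag_of n th * Pm)\<^sup>T"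
proof -
  note D = diag_of_carrier[of n th]
  have "(diag_of n th)\<^sup>T = diag_of n th" unfolding diag_of_def by (auto intro!: eq_matI)
  then have "(diag_of n th * Pm)\<^sup>T = Pm\<^sup>T * diag_of n th"
    using transpose_mult[OF D Pm] by simp
  moreover have "(diag_of n th * Pm * P) * (Pm\<^sup>T * diag_of n th) = diag_of n th * Pm * P * Pm\<^sup>T * diag_of n th"
    using D Pm P by (intro assoc_mult_mat[symmetric, of _ n K _ n _ n]) auto
  ultimately show ?thesis unfolding H_dcmm_def by simp
qed

lemma H_dcmm_index:
  assumes Pm: "Pm \<in> carrier_mat n K" and P: "P \<in> carrier_mat K K" and "i < n" "j < n"
  shows "H_dcmm n th Pm P $$ (i,j) = th i * th j * (Pm * P * Pm\<^sup>T) $$ (i,j)"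
proof -
  have DPm: "diag_of n th * Pm \<in> carrier_mat n K" by (rule mult_carrier_mat[OF diag_of_carrier Pm])
  have "H_dcmm n th Pm P $$ (i,j)
      = (\<Sum>k<K. \<Sum>l<K. th i * th j * (Pm $$ (i,k) * P $$ (k,l) * Pm $$ (j,l)))"
    unfolding H_dcmm_factor[OF Pm P] mult_mult_transpose_index[OF DPm P assms(3,4)]
    using diag_of_mult_index[OF Pm] assms(3,4) by (intro sum.cong refl) (simp add: mult_ac)
  then show ?thesis
    using mult_mult_transpose_index[OF Pm P assms(3,4)] by (simp add: sum_distrib_left)
qed

lemma H_dcmm_abs_index_le:
  assumes Pm: "membership_mat n K Pm" and P: "conn_mat K P" and th: "\<forall>i<n. 0 < th i"
    and ij: "i < n" "j < n"
  shows "\<bar>H_dcmm n th Pm P $$ (i,j)\<bar> \<le> (theta_max n th)\<^sup>2"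
proof -
  note G = membership_conn_index_bounds[OF Pm P ij]
  have "0 \<le> th i * th j" using th ij by (simp add: less_imp_le)
  then have "\<bar>H_dcmm n th Pm P $$ (i,j)\<bar> = th i * th j * (Pm * P * Pm\<^sup>T) $$ (i,j)"
    unfolding H_dcmm_index[OF membership_mat_carrier[OF Pm] conn_mat_carrier[OF P] ij] using G by simp
  also have "\<dots> \<le> th i * th j" using G(2) \<open>0 \<le> th i * th j\<close> by (rule mult_left_le)
  also have "\<dots> \<le> (theta_max n th)\<^sup>2"
    using th ij theta_max_ge[OF ij(1), of th] theta_max_ge[OF ij(2), of th]
    unfolding power2_eq_square by (intro mult_mono) auto
  finally show ?thesis .
qed

lemma dcmm_factor_norm_lower_bound:
  fixes w :: "real vec"
  assumes Pm: "membership_mat n K Pm" and w: "w \<in> carrier_vec K"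
    and pure: "\<forall>k<K. c * real n \<le> real (card (pure_nodes n Pm k))"
    and t: "\<And>i. i < n \<Longrightarrow> t \<le> th i" "0 \<le> t"
  shows "t\<^sup>2 * (c * real n) * (w \<bullet> w) \<le> ((diag_of n th * Pm) *\<^sub>v w) \<bullet> ((diag_of n th * Pm) *\<^sub>v w)"
proof -
  have "c * real n * (w \<bullet> w) \<le> (Pm *\<^sub>v w) \<bullet> (Pm *\<^sub>v w)"
    by (rule membership_mat_vec_norm_lower_bound[OF Pm w pure[rule_format]])
  then have "t\<^sup>2 * (c * real n * (w \<bullet> w)) \<le> t\<^sup>2 * ((Pm *\<^sub>v w) \<bullet> (Pm *\<^sub>v w))"
    by (rule mult_left_mono) simp
  also have "\<dots> \<le> ((diag_of n th * Pm) *\<^sub>v w) \<bullet> ((diag_of n th * Pm) *\<^sub>v w)"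
    using t by (intro diag_of_mult_vec_norm_lower_bound[OF membership_mat_carrier[OF Pm] w])
  finally show ?thesis by (simp add: mult.assoc)
qed

lemma dcmm_spectral_bounds:
  fixes Pm P V :: "real mat" and th :: "nat \<Rightarrow> real"
  assumes "0 < K" "0 < n" and th_pos: "\<forall>i<n. 0 < th i"
    and Pm: "membership_mat n K Pm" and P: "conn_mat K P"
    and ed: "eigdecomp n K (H_dcmm n th Pm P) V d"
    and pure: "\<forall>k<K. c2 * real n \<le> real (card (pure_nodes n Pm k))"
    and "0 < c2" "0 < c4" and ratio: "theta_max n th \<le> c4 * theta_min n th"
    and "0 < s" and s: "\<And>u. u \<in> carrier_vec K \<Longrightarrow> s * (u \<bullet> u) \<le> (P *\<^sub>v u) \<bullet> (P *\<^sub>v u)"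
  shows "alpha_sq (H_dcmm n th Pm P) \<le> real n * (theta_max n th)\<^sup>2"
    and "\<And>k. k < K \<Longrightarrow> c2 * sqrt s / c4\<^sup>2 * (real n * (theta_max n th)\<^sup>2) \<le> \<bar>d k\<bar>"
    and "\<And>k. k < K \<Longrightarrow> \<bar>d k\<bar> \<le> real n * (theta_max n th)\<^sup>2"
proof -
  note th = th_pos[rule_format]
  define tM tm H where "tM = theta_max n th" and "tm = theta_min n th" and "H = H_dcmm n th Pm P"
  have tm: "0 < tm" "\<And>i. i < n \<Longrightarrow> tm \<le> th i"
    unfolding tm_def using theta_min_pos[OF \<open>0 < n\<close> th] theta_min_le by auto
  note Pmc = membership_mat_carrier[OF Pm] and Pc = conn_mat_carrier[OF P]
  define A where "A = diag_of n th * Pm"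
  have Ac: "A \<in> carrier_mat n K" unfolding A_def by (rule mult_carrier_mat[OF diag_of_carrier Pmc])
  have HA: "H = A * P * A\<^sup>T" unfolding H_def A_def by (rule H_dcmm_factor[OF Pmc Pc])
  have Hc: "H \<in> carrier_mat n n" unfolding HA using Ac Pc by simp
  have Hb: "\<bar>H $$ (i,j)\<bar> \<le> tM\<^sup>2" if "i < n" "j < n" for i j
    unfolding H_def tM_def using H_dcmm_abs_index_le[OF Pm P th_pos that] .
  then show "alpha_sq (H_dcmm n th Pm P) \<le> real n * (theta_max n th)\<^sup>2"
    unfolding H_def[symmetric] tM_def[symmetric] using alpha_sq_le[OF Hc \<open>0 < n\<close>]
    by (simp add: abs_le_iff)
  fix k assume "k < K"
  note eig = eigdecomp_col_eigenvector[OF ed \<open>k < K\<close>, folded H_def]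
  show "\<bar>d k\<bar> \<le> real n * (theta_max n th)\<^sup>2"
    unfolding tM_def[symmetric] by (rule eigenvalue_abs_le[OF Hc eig Hb])
  have "0 \<le> tM"
    using th[OF \<open>0 < n\<close>] theta_max_ge[OF \<open>0 < n\<close>, of th] unfolding tM_def by simp
  with ratio have "tM\<^sup>2 \<le> (c4 * tm)\<^sup>2" unfolding tM_def tm_def by (rule power_mono)
  then have "tM\<^sup>2 / c4\<^sup>2 \<le> tm\<^sup>2"
    using \<open>0 < c4\<close> by (simp add: divide_le_eq power_mult_distrib mult.commute)
  then have "tM\<^sup>2 / c4\<^sup>2 * (c2 * real n * sqrt s) \<le> tm\<^sup>2 * (c2 * real n * sqrt s)"
    using \<open>0 < c2\<close> \<open>0 < s\<close> by (intro mult_right_mono) auto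
  then have scale: "c2 * sqrt s / c4\<^sup>2 * (real n * tM\<^sup>2) \<le> tm\<^sup>2 * (c2 * real n) * sqrt s"
    by (simp add: mult_ac)
  have "tm\<^sup>2 * (c2 * real n) * (w \<bullet> w) \<le> (A *\<^sub>v w) \<bullet> (A *\<^sub>v w)" if "w \<in> carrier_vec K" for w
    unfolding A_def using dcmm_factor_norm_lower_bound[OF Pm that pure] tm by simp
  then have "tm\<^sup>2 * (c2 * real n) * sqrt s \<le> \<bar>d k\<bar>"
    using eig ed \<open>k < K\<close> \<open>0 < c2\<close> \<open>0 < s\<close> Ac Pc s
    unfolding HA eigdecomp_def
    by (intro eigenvalue_lower_bound_factored[of A n K P "col V k"])
      (auto simp: scalar_prod_self_eq_0_iff[symmetric])
  with scale show "c2 * sqrt s / c4\<^sup>2 * (real n * (theta_max n th)\<^sup>2) \<le> \<bar>d k\<bar>"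
    unfolding tM_def by linarith
qed

theorem lemma8:
  fixes K :: nat and c0 c1 c2 c3 c4 :: real
  assumes "0 < K"
  shows
   "(0 < c0 \<and> c0 < 1 \<and> 0 < c1 \<and> c1 < 1 \<longrightarrow>
      (\<exists>c C. 0 < c \<and> 0 < C \<and>
        (\<forall>(n::nat) (\<theta>::real) Pm P V d.
          0 < n \<and> 0 < \<theta> \<and> membership_mat n K Pm \<and> conn_mat K P \<and>
          prob_mat n (\<theta> \<cdot>\<^sub>m (Pm * P * Pm\<^sup>T)) \<and>
          eigdecomp n K (\<theta> \<cdot>\<^sub>m (Pm * P * Pm\<^sup>T)) V d \<and>
          lambda_K (Pm\<^sup>T * Pm) \<ge> c0 * real n \<and> lambda_K P \<ge> c0 \<and>
          \<theta> \<ge> real n powr (- c1)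
          \<longrightarrow> alpha_sq (\<theta> \<cdot>\<^sub>m (Pm * P * Pm\<^sup>T)) \<le> real n * \<theta> \<and>
              (\<forall>k<K. c * (real n * \<theta>) \<le> \<bar>d k\<bar> \<and> \<bar>d k\<bar> \<le> C * (real n * \<theta>)))))
    \<and>
    (\<forall>P. conn_mat K P \<and> 0 < c2 \<and> c2 < 1 \<and> 0 < c3 \<and> c3 < 1 \<and> 0 < c4 \<longrightarrow>
      (\<exists>c C. 0 < c \<and> 0 < C \<and>
        (\<forall>(n::nat) (th::nat \<Rightarrow> real) Pm V d.
          0 < n \<and> (\<forall>i<n. 0 < th i) \<and> membership_mat n K Pm \<and>
          prob_mat n (H_dcmm n th Pm P) \<and> eigdecomp n K (H_dcmm n th Pm P) V d \<and>
          (\<forall>k<K. real (card (pure_nodes n Pm k)) \<ge> c2 * real n) \<and>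
          (theta_max n th) \<le> c4 * (theta_min n th) \<and> (theta_min n th)\<^sup>2 \<ge> real n powr (- c3)
          \<longrightarrow> alpha_sq (H_dcmm n th Pm P) \<le> real n * (theta_max n th)\<^sup>2 \<and>
              (\<forall>k<K. c * (real n * (theta_max n th)\<^sup>2) \<le> \<bar>d k\<bar> \<and> \<bar>d k\<bar> \<le> C * (real n * (theta_max n th)\<^sup>2)))))"
  \<comment> \<open>The entry bounds come from the structure of \<open>\<Pi>\<close> and \<open>P\<close>, so \<open>prob_mat\<close>, the lower
    bounds on \<open>\<theta>\<close>, \<open>\<theta>\<^sub>m\<^sub>i\<^sub>n\<close> and the upper bounds on \<open>c0\<close>, \<open>c2\<close> are not needed.\<close>
  apply (intro conjI impI allI)
  subgoal
    using mmsb_spectral_bounds[OF assms]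
    by (intro exI[of _ "c0\<^sup>2"] exI[of _ "1::real"]) (auto simp: zero_less_power)
  subgoal premises hyps for P
  proof -
    obtain s where "0 < s" and s: "\<And>u. u \<in> carrier_vec K \<Longrightarrow> s * (u \<bullet> u) \<le> (P *\<^sub>v u) \<bullet> (P *\<^sub>v u)"
      using invertible_mat_vec_lower_bound[of P K] hyps unfolding conn_mat_def by blast
    show ?thesis
      using dcmm_spectral_bounds[OF assms, where s = s] hyps \<open>0 < s\<close> s
      by (intro exI[of _ "c2 * sqrt s / c4\<^sup>2"] exI[of _ "1::real"]) auto
  qed
  done

end
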